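(* Let $\sigma\in\mathcal C_n(321)$ and $\tau\in\mathcal C_m(321)$ with $n,m\ge1$, and let $k$ be the index with $\hat\tau_k=1$. Define the word $$\hat\tau\odot\hat\sigma=(\hat\tau_1+n)\cdots(\hat\tau_k+n)\,\hat\sigma_1\hat\sigma_2\cdots\hat\sigma_n\,(\hat\tau_{k+1}+n)\cdots(\hat\tau_m+n)\in S_{n+m}.$$ Then $\theta^{-1}(\hat\tau\odot\hat\sigma)\in\mathcal C_{n+m}(321)$.
   Context: Permutations of $[n]$ are written in one-line notation. A permutation contains $321$ if there are $i<j<k$ with $\pi_i>\pi_j>\pi_k$. $\mathcal C_n$ is the set of cyclic permutations of $[n]$ (a single $n$-cycle), and $\mathcal C_n(321)$ those avoiding $321$. The standard cycle notation of $\pi$ writes each cycle with its largest element first, as $(m,\pi(m),\pi^2(m),\dots)$, and lists the cycles in increasing order of their largest elements. $\theta:S_n\to S_n$ sends $\pi$ to the permutation whose one-line notation is the standard cycle notation of $\pi$ with parentheses erased; $\hat\pi=\theta(\pi)$. *)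

theory Defs
  imports Main
begin

text \<open>Permutations of [n] are represented by their one-line notation: a list
  w of length n with w ! (i-1) = pi(i) for i in {1..n}.\<close>

definition is_perm :: "nat \<Rightarrow> nat list \<Rightarrow> bool" where
  "is_perm n w \<longleftrightarrow> length w = n \<and> distinct w \<and> set w = {1..n}"

definition perm_fun :: "nat list \<Rightarrow> nat \<Rightarrow> nat" where
  "perm_fun w i = w ! (i - 1)"

definition contains321 :: "nat list \<Rightarrow> bool" where
  "contains321 w \<longleftrightarrow> (\<exists>i j k. i < j \<and> j < k \<and> k < length w \<and> w ! i > w ! j \<and> w ! j > w ! k)"

text \<open>Cyclic permutation: a single n-cycle, i.e. the orbit of 1 is all of [n].\<close>
definition cyclic_perm :: "nat \<Rightarrow> nat list \<Rightarrow> bool" where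
  "cyclic_perm n w \<longleftrightarrow> is_perm n w \<and> {(perm_fun w ^^ k) 1 | k. True} = {1..n}"

definition Cyc :: "nat \<Rightarrow> nat list set" where
  "Cyc n = {w. cyclic_perm n w}"

definition Cyc321 :: "nat \<Rightarrow> nat list set" where
  "Cyc321 n = {w. cyclic_perm n w \<and> \<not> contains321 w}"

definition cycle_len :: "nat list \<Rightarrow> nat \<Rightarrow> nat" where
  "cycle_len w m = (LEAST k. 0 < k \<and> (perm_fun w ^^ k) m = m)"

definition cycle_list :: "nat list \<Rightarrow> nat \<Rightarrow> nat list" where
  "cycle_list w m = map (\<lambda>k. (perm_fun w ^^ k) m) [0..<cycle_len w m]"

definition cycle_maxima :: "nat list \<Rightarrow> nat set" where
  "cycle_maxima w = {m \<in> {1..length w}. \<forall>k. (perm_fun w ^^ k) m \<le> m}"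

text \<open>theta: standard cycle notation (each cycle starting with its largest
  element, cycles in increasing order of largest elements), parentheses erased.\<close>
definition theta :: "nat list \<Rightarrow> nat list" where
  "theta w = concat (map (cycle_list w) (sorted_list_of_set (cycle_maxima w)))"

end

theory Submission
  imports Defs
begin

(* A cyclic permutation of [N] consists of one cycle, with largest element N, so theta maps it to
   that cycle written from N: a word w listing [N], starting with N, along which the permutation
   sends each letter to the next one, cyclically. Conversely, such a word is theta of exactly one
   permutation, and that permutation is cyclic.
   Rotated by k, the word tau-hat . sigma-hat becomes sigma-hat followed by tau-hat shifted by n and
   rotated to end at n+1. So its preimage acts as sigma on [n] and as the shifted tau above n+1,
   except that n+1 goes to n and sigma^-1(n) goes to tau(1)+n. In one-line notation it is sigma with
   n replaced by tau(1)+n, followed by n and the shifted tau(2)...tau(m). A 321 pattern in it lies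
   either in the first n places, which are order-isomorphic to sigma, or among the values above n,
   which occur in the order of tau. *)

lemma is_perm_iff_set: "is_perm N w \<longleftrightarrow> length w = N \<and> set w = {1..N}"
  using card_distinct[of w] by (auto simp: is_perm_def)

lemma perm_fun_in:
  assumes "is_perm N p" "x \<in> {1..N}"
  shows "perm_fun p x \<in> {1..N}"
  using assms nth_mem[of "x - 1" p] by (auto simp: is_perm_def perm_fun_def)

lemma inj_on_perm_fun: "is_perm N p \<Longrightarrow> inj_on (perm_fun p) {1..N}"
  by (auto simp: inj_on_def is_perm_def perm_fun_def nth_eq_iff_index_eq)

lemma funpow_in_closed: "f ` A \<subseteq> A \<Longrightarrow> x \<in> A \<Longrightarrow> (f ^^ k) x \<in> A"
  by (induction k) auto

lemma funpow_perm_fun_in: "is_perm N p \<Longrightarrow> x \<in> {1..N} \<Longrightarrow> (perm_fun p ^^ k) x \<in> {1..N}"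
  by (intro funpow_in_closed image_subsetI perm_fun_in)

lemma funpow_returns:
  assumes "inj_on f A" "f ` A \<subseteq> A" "finite A" "x \<in> A"
  obtains c where "0 < c" "(f ^^ c) x = x"
proof -
  define g where "g y = (if y \<in> A then f y else y)" for y
  have "inj g"
    using assms(1,2) by (auto simp: inj_def inj_on_def g_def split: if_splits)
  have g_f: "(g ^^ k) x = (f ^^ k) x" for k
    by (induction k) (simp_all add: g_def funpow_in_closed[OF assms(2,4)])
  have "{y. \<exists>k. y = (g ^^ k) x} \<subseteq> A"
    using g_f funpow_in_closed[OF assms(2,4)] by auto
  then have "finite {y. \<exists>k. y = (g ^^ k) x}"
    using assms(3) finite_subset by blast
  then show thesis
    using funpow_inj_finite[OF \<open>inj g\<close>] that g_f by metis
qed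

lemma cycle_len_returns:
  assumes "is_perm N p" "x \<in> {1..N}"
  shows "0 < cycle_len p x \<and> (perm_fun p ^^ cycle_len p x) x = x"
proof -
  obtain c where "0 < c" "(perm_fun p ^^ c) x = x"
    using funpow_returns[OF inj_on_perm_fun[OF assms(1)] _ _ assms(2)] perm_fun_in[OF assms(1)]
    by blast
  then show ?thesis
    unfolding cycle_len_def by (rule LeastI[of "\<lambda>k. 0 < k \<and> _ k", OF conjI])
qed

definition follows_cycle :: "nat list \<Rightarrow> nat list \<Rightarrow> bool" where
  "follows_cycle p w \<longleftrightarrow> (\<forall>i<length w. perm_fun p (w ! i) = w ! (Suc i mod length w))"

lemma funpow_follows_cycle:
  assumes "follows_cycle p w" "a < length w"
  shows "(perm_fun p ^^ j) (w ! a) = w ! ((a + j) mod length w)"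
proof (induction j)
  case (Suc j)
  have "0 < length w"
    using assms(2) by linarith
  then have "(a + j) mod length w < length w"
    by simp
  then show ?case
    using Suc assms(1) by (simp add: follows_cycle_def mod_Suc_eq)
qed (simp add: assms(2))

lemma follows_cycle_eqI:
  assumes "follows_cycle p u" "follows_cycle p v" "length u = length v" "u ! 0 = v ! 0"
  shows "u = v"
proof (rule nth_equalityI)
  fix i assume "i < length u"
  then show "u ! i = v ! i"
    using funpow_follows_cycle[OF assms(1), of 0 i] funpow_follows_cycle[OF assms(2), of 0 i] assms(3,4)
    by force
qed (fact assms(3))

lemma follows_cycle_rotate:
  assumes "follows_cycle p w"
  shows "follows_cycle p (rotate k w)"
  unfolding follows_cycle_def
proof (intro allI impI)
  fix i assume "i < length (rotate k w)"
  then have i: "i < length w"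
    by simp
  then have "0 < length w"
    by linarith
  then have "Suc i mod length w < length w" "(k + i) mod length w < length w"
    by simp_all
  then show "perm_fun p (rotate k w ! i) = rotate k w ! (Suc i mod length (rotate k w))"
    using assms i by (simp add: follows_cycle_def nth_rotate mod_Suc_eq mod_add_right_eq)
qed

lemma follows_cycle_rotate_iff: "follows_cycle p (rotate k w) \<longleftrightarrow> follows_cycle p w"
proof
  assume "follows_cycle p (rotate k w)"
  then have "follows_cycle p (rotate (length w - k mod length w) (rotate k w))"
    by (rule follows_cycle_rotate)
  moreover have "rotate (length w - k mod length w) (rotate k w) = w"
  proof (cases "w = []")
    case False
    then have "length w - k mod length w + k = length w * Suc (k div length w)"
      by (simp add: minus_mod_eq_mult_div [symmetric])
    then show ?thesis
      by (simp add: rotate_rotate)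
  qed simp
  ultimately show "follows_cycle p w" by simp
qed (rule follows_cycle_rotate)

lemma follows_cycle_cycle_list:
  assumes "is_perm N p" "x \<in> {1..N}"
  shows "follows_cycle p (cycle_list p x)"
  using cycle_len_returns[OF assms]
  by (auto simp: follows_cycle_def cycle_list_def funpow_mod_eq)

lemma follows_cycle_is_perm:
  assumes "follows_cycle p w" "is_perm N w" "length p = N"
  shows "is_perm N p"
proof -
  have "y \<in> set p" if "y \<in> {1..N}" for y
  proof -
    have "y \<in> set (rotate1 w)"
      using that assms(2) by (simp add: is_perm_def)
    then obtain i where "i < length w" "rotate1 w ! i = y"
      by (metis in_set_conv_nth length_rotate1)
    then have i: "i < N" "y = w ! (Suc i mod N)"
      using assms(2) by (auto simp: nth_rotate1 is_perm_def)
    then have "w ! i \<in> {1..N}"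
      using assms(2) nth_mem[of i w] by (auto simp: is_perm_def)
    moreover have "y = p ! (w ! i - 1)"
      using assms(1,2) i by (simp add: follows_cycle_def perm_fun_def is_perm_def)
    ultimately show ?thesis
      using assms(3) by auto
  qed
  then have "set p = {1..N}"
    using card_length[of p] assms(3) by (intro card_seteq [symmetric]) auto
  then show ?thesis
    using assms(3) by (simp add: is_perm_iff_set)
qed

lemma follows_cycle_unique:
  assumes "follows_cycle p w" "follows_cycle q w" "is_perm N w" "length p = N" "length q = N"
  shows "p = q"
proof (rule nth_equalityI)
  fix r assume "r < length p"
  then have "Suc r \<in> set w"
    using assms(3,4) by (simp add: is_perm_def)
  then obtain i where i: "i < length w" "w ! i = Suc r"
    by (auto simp: in_set_conv_nth)
  show "p ! r = q ! r"
    using assms(1,2)[unfolded follows_cycle_def, rule_format, OF i(1)] i(2)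
    by (simp add: perm_fun_def)
qed (simp add: assms(4,5))

lemma cyclic_perm_reaches:
  assumes "cyclic_perm N p" "x \<in> {1..N}" "y \<in> {1..N}"
  obtains j where "(perm_fun p ^^ j) x = y"
proof -
  let ?f = "perm_fun p"
  have "is_perm N p" and orbit: "{(?f ^^ k) 1 | k. True} = {1..N}"
    using assms(1) by (auto simp: cyclic_perm_def)
  obtain a b where a: "x = (?f ^^ a) 1" and b: "y = (?f ^^ b) 1"
    using assms(2,3) orbit by blast
  define c where "c = cycle_len p 1"
  have "0 < c" "(?f ^^ c) 1 = 1"
    using cycle_len_returns[OF \<open>is_perm N p\<close>] assms(2) by (auto simp: c_def)
  have "(?f ^^ (b + (c - 1) * a)) x = (?f ^^ (b + (c - 1) * a + a)) 1"
    by (simp add: a funpow_add)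
  also have "b + (c - 1) * a + a = b + c * a"
    using \<open>0 < c\<close> by (cases c) auto
  also have "(?f ^^ (b + c * a)) 1 = (?f ^^ b) ((?f ^^ (c * a)) 1)"
    by (simp add: funpow_add)
  also have "(?f ^^ (c * a)) 1 = 1"
    using funpow_mod_eq[where m = "c * a", OF \<open>(?f ^^ c) 1 = 1\<close>] by simp
  finally show thesis
    using that b by blast
qed

lemma cycle_maxima_cyclic_perm:
  assumes "cyclic_perm N p" "1 \<le> N"
  shows "cycle_maxima p = {N}"
proof -
  have P: "is_perm N p"
    using assms(1) by (simp add: cyclic_perm_def)
  have "x = N" if "x \<in> cycle_maxima p" for x
  proof -
    have x: "x \<in> {1..N}" "\<forall>k. (perm_fun p ^^ k) x \<le> x"
      using that P by (auto simp: cycle_maxima_def is_perm_def)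
    moreover obtain j where "(perm_fun p ^^ j) x = N"
      using cyclic_perm_reaches[OF assms(1) x(1)] assms(2) by auto
    ultimately show ?thesis
      by (metis atLeastAtMost_iff le_antisym)
  qed
  moreover have "N \<in> cycle_maxima p"
    using funpow_perm_fun_in[OF P] P assms(2) by (auto simp: cycle_maxima_def is_perm_def)
  ultimately show ?thesis
    by blast
qed

lemma follows_cycle_theta:
  assumes "is_perm N p" "1 \<le> N" "theta p ! 0 = N"
  shows "follows_cycle p (theta p)"
proof -
  let ?M = "cycle_maxima p"
  have fin: "finite ?M" and sub: "?M \<subseteq> {1..N}"
    using assms(1) by (auto simp: cycle_maxima_def is_perm_def)
  have "N \<in> ?M"
    using funpow_perm_fun_in[OF assms(1)] assms(1,2) by (auto simp: cycle_maxima_def is_perm_def)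
  then have ne: "?M \<noteq> {}" and "Min ?M \<in> {1..N}"
    using Min_in[OF fin] sub by blast+
  then have "0 < cycle_len p (Min ?M)"
    using cycle_len_returns[OF assms(1)] by blast
  then have "theta p ! 0 = Min ?M"
    by (simp add: theta_def sorted_list_of_set_nonempty[OF fin ne] cycle_list_def nth_append)
  with assms(3) have "?M = {N}"
    using sub \<open>N \<in> ?M\<close> Min_le[OF fin] by fastforce
  then have "theta p = cycle_list p N"
    by (simp add: theta_def)
  then show ?thesis
    using follows_cycle_cycle_list[OF assms(1)] assms(2) by simp
qed

lemma theta_cyclic_perm:
  assumes "cyclic_perm N p" "1 \<le> N"
  shows "is_perm N (theta p) \<and> theta p ! 0 = N \<and> follows_cycle p (theta p)"
proof -
  let ?f = "perm_fun p" and ?c = "cycle_len p N"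
  have P: "is_perm N p" and N: "N \<in> {1..N}"
    using assms by (auto simp: cyclic_perm_def)
  have c: "0 < ?c" "(?f ^^ ?c) N = N"
    using cycle_len_returns[OF P N] by auto
  have theta: "theta p = map (\<lambda>k. (?f ^^ k) N) [0..<?c]"
    using cycle_maxima_cyclic_perm[OF assms] by (simp add: theta_def cycle_list_def)
  have "(?f ^^ k) N \<noteq> N" if "0 < k" "k < ?c" for k
    using not_less_Least[of k "\<lambda>k. 0 < k \<and> (?f ^^ k) N = N"] that
    by (auto simp: cycle_len_def)
  then have "distinct (theta p)"
    unfolding theta distinct_map using inj_on_funpow_least[OF c(2)] by simp
  moreover have "set (theta p) = {1..N}"
  proof
    show "set (theta p) \<subseteq> {1..N}"
      using funpow_perm_fun_in[OF P N] by (auto simp: theta)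
    show "{1..N} \<subseteq> set (theta p)"
    proof
      fix y assume "y \<in> {1..N}"
      then obtain j where "(?f ^^ j) N = y"
        using cyclic_perm_reaches[OF assms(1) N] by blast
      then have "(?f ^^ (j mod ?c)) N = y"
        by (simp add: funpow_mod_eq[OF c(2)])
      then show "y \<in> set (theta p)"
        using c(1) by (auto simp: theta)
    qed
  qed
  ultimately have "is_perm N (theta p) \<and> theta p ! 0 = N"
    using c(1) distinct_card[of "theta p"] by (simp add: is_perm_def theta)
  then show ?thesis
    using follows_cycle_theta[OF P assms(2)] by simp
qed

lemma theta_eq_if_follows_cycle:
  assumes "is_perm N p" "is_perm N w" "1 \<le> N" "w ! 0 = N" "follows_cycle p w"
  shows "cyclic_perm N p \<and> theta p = w"
proof -
  let ?f = "perm_fun p"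
  have w: "length w = N" "set w = {1..N}"
    using assms(2) by (auto simp: is_perm_def)
  obtain a where a: "a < N" "w ! a = 1"
    using w assms(3) by (metis atLeastAtMost_iff in_set_conv_nth order_refl)
  have "y \<in> {(?f ^^ k) 1 | k. True}" if "y \<in> {1..N}" for y
  proof -
    obtain b where b: "b < N" "w ! b = y"
      using w \<open>y \<in> {1..N}\<close> by (metis in_set_conv_nth)
    have "(?f ^^ (b + N - a)) 1 = w ! ((a + (b + N - a)) mod N)"
      using funpow_follows_cycle[OF assms(5)] a w(1) by metis
    also have "(a + (b + N - a)) mod N = b"
      using a(1) b(1) by simp
    finally show ?thesis
      using b(2) by auto
  qed
  then have cyclic: "cyclic_perm N p"
    using funpow_perm_fun_in[OF assms(1), of 1] assms(1,3)
    by (auto simp: cyclic_perm_def)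
  have "theta p = w"
    using theta_cyclic_perm[OF cyclic assms(3)] assms(4) w(1)
    by (intro follows_cycle_eqI[OF _ assms(5)]) (simp_all add: is_perm_def)
  with cyclic show ?thesis ..
qed

lemma theta_preimage_follows_cycle:
  assumes "is_perm N w" "1 \<le> N" "w ! 0 = N" "follows_cycle p w" "length p = N"
  shows "{\<pi>. is_perm N \<pi> \<and> theta \<pi> = w} = {p} \<and> cyclic_perm N p"
proof -
  have p: "is_perm N p"
    by (rule follows_cycle_is_perm[OF assms(4,1,5)])
  have "\<pi> = p" if "is_perm N \<pi>" "theta \<pi> = w" for \<pi>
  proof (rule follows_cycle_unique[OF _ assms(4,1)])
    show "follows_cycle \<pi> w"
      using follows_cycle_theta[OF that(1) assms(2)] that(2) assms(3) by simp
  qed (use that(1) assms(5) in \<open>simp_all add: is_perm_def\<close>)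
  then show ?thesis
    using theta_eq_if_follows_cycle[OF p assms(1-4)] p by blast
qed

lemma is_perm_shifted_word:
  assumes "is_perm n S" "is_perm m T"
  shows "is_perm (n + m) (map (\<lambda>x. x + n) (take k T) @ S @ map (\<lambda>x. x + n) (drop k T))"
proof -
  have "set (map (\<lambda>x. x + n) (take k T) @ S @ map (\<lambda>x. x + n) (drop k T))
      = set S \<union> (\<lambda>x. x + n) ` set T"
    using set_append[of "take k T" "drop k T"] by auto
  also have "\<dots> = {1..n + m}"
    using assms by (auto simp: is_perm_def image_add_atLeastAtMost)
  finally show ?thesis
    using assms by (simp add: is_perm_iff_set)
qed

lemma rotate_shifted_word:
  assumes "k \<le> length T"
  shows "rotate k (map f (take k T) @ S @ map f (drop k T)) = S @ map f (rotate k T)"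
proof -
  have "rotate k T = drop k T @ take k T"
    using assms by (cases "k = length T") (simp_all add: rotate_drop_take)
  moreover have "rotate k (map f (take k T) @ S @ map f (drop k T))
      = S @ map f (drop k T) @ map f (take k T)"
    using rotate_append[of "map f (take k T)"] assms by simp
  ultimately show ?thesis
    by simp
qed

lemma nth_0_shifted_word:
  "0 < k \<Longrightarrow> T \<noteq> [] \<Longrightarrow> (map f (take k T) @ S @ map f (drop k T)) ! 0 = f (T ! 0)"
  by (cases T) (simp_all add: nth_append)

(* Splices the cycle of sigma into that of tau shifted by n: n+1 goes to n, sigma^-1(n) to tau(1)+n. *)
definition insert_cycle :: "nat \<Rightarrow> nat list \<Rightarrow> nat list \<Rightarrow> nat list" where
  "insert_cycle n \<sigma> \<tau> =
    map (\<lambda>v. if v = n then hd \<tau> + n else v) \<sigma> @ n # map (\<lambda>v. v + n) (tl \<tau>)"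

lemma length_insert_cycle: "\<tau> \<noteq> [] \<Longrightarrow> length (insert_cycle n \<sigma> \<tau>) = length \<sigma> + length \<tau>"
  by (simp add: insert_cycle_def)

lemma nth_insert_cycle:
  assumes "length \<sigma> = n" "\<tau> \<noteq> []" "q < n + length \<tau>"
  shows "insert_cycle n \<sigma> \<tau> ! q =
    (if q < n then (if \<sigma> ! q = n then \<tau> ! 0 + n else \<sigma> ! q)
     else if q = n then n else \<tau> ! (q - n) + n)"
  using assms by (auto simp: insert_cycle_def nth_append nth_tl hd_conv_nth nth_Cons' Suc_diff_Suc)

lemma perm_fun_insert_cycle:
  assumes "length \<sigma> = n" "\<tau> \<noteq> []" "v \<in> {1..n + length \<tau>}"
  shows "perm_fun (insert_cycle n \<sigma> \<tau>) v =
    (if v \<le> n then (if perm_fun \<sigma> v = n then perm_fun \<tau> 1 + n else perm_fun \<sigma> v)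
     else if v = Suc n then n else perm_fun \<tau> (v - n) + n)"
proof -
  have "v - 1 < n + length \<tau>"
    using assms(3) by auto
  note nth = nth_insert_cycle[OF assms(1,2) this]
  consider (low) "v - 1 < n" "v \<le> n" | (mid) "v - 1 = n" "v = Suc n"
    | (high) "\<not> v - 1 < n" "v - 1 \<noteq> n" "\<not> v \<le> n" "v \<noteq> Suc n" "v - 1 - n = v - n - 1"
    using assms(3) by fastforce
  then show ?thesis
    by cases (use nth in \<open>simp_all add: perm_fun_def\<close>)
qed

lemma insert_cycle_follows_cycle:
  assumes "length \<sigma> = n" "is_perm n S" "S ! 0 = n" "follows_cycle \<sigma> S" "1 \<le> n"
    and "length \<tau> = m" "is_perm m U" "U ! (m - 1) = 1" "follows_cycle \<tau> U" "1 \<le> m"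
  shows "follows_cycle (insert_cycle n \<sigma> \<tau>) (S @ map (\<lambda>x. x + n) U)"
  unfolding follows_cycle_def
proof (intro allI impI)
  let ?P = "insert_cycle n \<sigma> \<tau>" and ?w = "S @ map (\<lambda>x. x + n) U"
  have len: "length S = n" "length U = m" and dist: "distinct S" "distinct U"
    using assms(2,7) by (auto simp: is_perm_def)
  have "\<tau> \<noteq> []"
    using assms(6,10) by auto
  note P = perm_fun_insert_cycle[OF assms(1) \<open>\<tau> \<noteq> []\<close>, unfolded assms(6)]
  have S: "S ! j \<in> {1..n}" "perm_fun \<sigma> (S ! j) = S ! (Suc j mod n)" if "j < n" for j
    using assms(2,4) that nth_mem[of j S] by (auto simp: is_perm_def follows_cycle_def)
  have U: "U ! j \<in> {1..m}" "perm_fun \<tau> (U ! j) = U ! (Suc j mod m)" if "j < m" for j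
    using assms(7,9) that nth_mem[of j U] by (auto simp: is_perm_def follows_cycle_def)
  have \<tau>1: "perm_fun \<tau> 1 = U ! 0"
    using U(2)[of "m - 1"] assms(8,10) by simp
  fix i assume "i < length ?w"
  then consider (inS) "Suc i < n" | (lastS) "Suc i = n" | (inU) "n \<le> i" "Suc i < n + m"
    | (lastU) "Suc i = n + m"
    using len by fastforce
  then show "perm_fun ?P (?w ! i) = ?w ! (Suc i mod length ?w)"
  proof cases
    case inS
    have "S ! Suc i \<noteq> n"
      using assms(3) nth_eq_iff_index_eq[OF dist(1), of "Suc i" 0] len inS by auto
    then show ?thesis
      using P[of "S ! i"] S[of i] len inS by (auto simp: nth_append)
  next
    case lastS
    then show ?thesis
      using P[of "S ! i"] S[of i] len assms(3,10) \<tau>1 by (auto simp: nth_append)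
  next
    case inU
    have "U ! (i - n) \<noteq> 1"
      using assms(8) nth_eq_iff_index_eq[OF dist(2), of "i - n" "m - 1"] len inU by auto
    moreover have "U ! (i - n) \<in> {1..m}" "perm_fun \<tau> (U ! (i - n)) = U ! Suc (i - n)"
      using U[of "i - n"] inU by auto
    ultimately show ?thesis
      using P[of "U ! (i - n) + n"] len inU by (auto simp: nth_append Suc_diff_le)
  next
    case lastU
    then have "i - n = m - 1"
      by simp
    with lastU show ?thesis
      using P[of "U ! (m - 1) + n"] len assms(3,5,8,10) by (auto simp: nth_append)
  qed
qed

lemma insert_cycle_follows_shifted_word:
  assumes "length \<sigma> = n" "is_perm n S" "S ! 0 = n" "follows_cycle \<sigma> S" "1 \<le> n"
    and "length \<tau> = m" "is_perm m T" "follows_cycle \<tau> T" "1 \<le> k" "k \<le> m" "T ! (k - 1) = 1"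
  shows "follows_cycle (insert_cycle n \<sigma> \<tau>)
    (map (\<lambda>x. x + n) (take k T) @ S @ map (\<lambda>x. x + n) (drop k T))"
proof -
  define U where "U = rotate k T"
  have "is_perm m U"
    using assms(7) by (simp add: U_def is_perm_def)
  moreover have "U ! (m - 1) = 1"
  proof -
    have "k + (m - 1) = k - 1 + m" "k - 1 < m"
      using assms(9,10) by linarith+
    then have "(k + (m - 1)) mod m = k - 1"
      by (metis mod_add_self2 mod_less)
    moreover have "length T = m"
      using assms(7) by (simp add: is_perm_def)
    moreover have "m - 1 < m"
      using assms(9,10) by linarith
    ultimately show ?thesis
      using assms(11) by (simp add: U_def nth_rotate)
  qed
  moreover have "follows_cycle \<tau> U"
    unfolding U_def by (rule follows_cycle_rotate[OF assms(8)])
  ultimately have "follows_cycle (insert_cycle n \<sigma> \<tau>) (S @ map (\<lambda>x. x + n) U)"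
    using insert_cycle_follows_cycle[OF assms(1-6)] assms(9,10) by simp
  moreover have "rotate k (map (\<lambda>x. x + n) (take k T) @ S @ map (\<lambda>x. x + n) (drop k T))
      = S @ map (\<lambda>x. x + n) U"
    using assms(7,10) by (simp add: U_def is_perm_def rotate_shifted_word)
  ultimately show ?thesis
    by (metis follows_cycle_rotate_iff)
qed

lemma insert_cycle_prefix_less_iff:
  assumes "is_perm n \<sigma>" "\<tau> \<noteq> []" "1 \<le> \<tau> ! 0" "i < n" "j < n"
  shows "insert_cycle n \<sigma> \<tau> ! i < insert_cycle n \<sigma> \<tau> ! j \<longleftrightarrow> \<sigma> ! i < \<sigma> ! j"
proof -
  define f where "f v = (if v = n then \<tau> ! 0 + n else v)" for v
  have mono: "strict_mono_on {1..n} f"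
    using assms(3) by (auto simp: strict_mono_on_def f_def)
  have "length \<sigma> = n"
    using assms(1) by (simp add: is_perm_def)
  then have nth: "insert_cycle n \<sigma> \<tau> ! q = f (\<sigma> ! q)" if "q < n" for q
    using nth_insert_cycle[of \<sigma> n \<tau> q] assms(2) that by (simp add: f_def)
  have "\<sigma> ! q \<in> {1..n}" if "q < n" for q
    using assms(1) that nth_mem[of q \<sigma>] by (auto simp: is_perm_def)
  then show ?thesis
    using strict_mono_on_less[OF mono] nth assms(4,5) by simp
qed

lemma insert_cycle_above:
  assumes "is_perm n \<sigma>" "\<tau> \<noteq> []" "q < n + length \<tau>" "n < insert_cycle n \<sigma> \<tau> ! q"
  shows "q \<noteq> n \<and> (q < n \<longrightarrow> \<sigma> ! q = n)
    \<and> insert_cycle n \<sigma> \<tau> ! q = \<tau> ! (if q < n then 0 else q - n) + n"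
proof -
  have "length \<sigma> = n"
    using assms(1) by (simp add: is_perm_def)
  note nth = nth_insert_cycle[OF this assms(2,3)]
  have "\<sigma> ! q \<le> n" if "q < n"
    using assms(1) that nth_mem[of q \<sigma>] by (auto simp: is_perm_def)
  then show ?thesis
    using nth assms(4) by (cases "q < n"; cases "\<sigma> ! q = n") auto
qed

lemma insert_cycle_321_above:
  assumes "is_perm n \<sigma>" "is_perm m \<tau>" "1 \<le> m"
    and "i < j" "j < l" "l < n + m" "n \<le> l"
    and "insert_cycle n \<sigma> \<tau> ! j < insert_cycle n \<sigma> \<tau> ! i"
    and "insert_cycle n \<sigma> \<tau> ! l < insert_cycle n \<sigma> \<tau> ! j"
  shows "contains321 \<tau>"
proof -
  let ?P = "insert_cycle n \<sigma> \<tau>" and ?idx = "\<lambda>q. if q < n then 0 else q - n"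
  have len: "length \<sigma> = n" "length \<tau> = m" and "distinct \<sigma>" "\<tau> \<noteq> []"
    using assms(1-3) by (auto simp: is_perm_def)
  have \<tau>_pos: "1 \<le> \<tau> ! q" if "q < m" for q
    using assms(2) that nth_mem[of q \<tau>] by (auto simp: is_perm_def)
  note nth = nth_insert_cycle[OF len(1) \<open>\<tau> \<noteq> []\<close>, unfolded len(2)]
  note above = insert_cycle_above[OF assms(1) \<open>\<tau> \<noteq> []\<close>, unfolded len(2)]
  have "n \<le> ?P ! l"
    using nth[of l] assms(6,7) by auto
  then have "n < ?P ! j" "n < ?P ! i"
    using assms(8,9) by linarith+
  have "n < j"
  proof (rule ccontr)
    assume "\<not> n < j"
    then have "j < n" "i < n"
      using above[of j] \<open>n < ?P ! j\<close> assms(4-6) by fastforce+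
    then have "\<sigma> ! i = \<sigma> ! j"
      using above[of i] above[of j] \<open>n < ?P ! j\<close> \<open>n < ?P ! i\<close> assms(4-6) by simp
    then show False
      using nth_eq_iff_index_eq[OF \<open>distinct \<sigma>\<close>] len(1) \<open>j < n\<close> assms(4) by fastforce
  qed
  moreover have "l - n < m"
    using assms(6,7) by linarith
  ultimately have "n < ?P ! l"
    using nth[of l] \<tau>_pos[of "l - n"] assms(5,6) by auto
  then have "\<tau> ! ?idx j < \<tau> ! ?idx i" "\<tau> ! ?idx l < \<tau> ! ?idx j"
    using above[of i] above[of j] above[of l] \<open>n < ?P ! j\<close> \<open>n < ?P ! i\<close> assms(4-6,8,9)
    by simp_all
  moreover have "?idx i < ?idx j" "?idx j < ?idx l" "?idx l < m"
    using above[of i] \<open>n < ?P ! i\<close> \<open>n < j\<close> assms(4-6) by auto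
  ultimately show ?thesis
    using len(2) unfolding contains321_def by blast
qed

lemma insert_cycle_avoids_321:
  assumes "is_perm n \<sigma>" "\<not> contains321 \<sigma>" "is_perm m \<tau>" "\<not> contains321 \<tau>" "1 \<le> m"
  shows "\<not> contains321 (insert_cycle n \<sigma> \<tau>)"
proof
  let ?P = "insert_cycle n \<sigma> \<tau>"
  have len: "length \<sigma> = n" "length \<tau> = m" and "\<tau> \<noteq> []" "1 \<le> \<tau> ! 0"
    using assms(3,5) nth_mem[of 0 \<tau>] assms(1) by (auto simp: is_perm_def)
  assume "contains321 ?P"
  then obtain i j l where ijl: "i < j" "j < l" "l < n + m" and "?P ! j < ?P ! i" "?P ! l < ?P ! j"
    using length_insert_cycle[OF \<open>\<tau> \<noteq> []\<close>] len by (auto simp: contains321_def)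
  show False
  proof (cases "l < n")
    case True
    then have "\<sigma> ! j < \<sigma> ! i" "\<sigma> ! l < \<sigma> ! j"
      using insert_cycle_prefix_less_iff[OF assms(1) \<open>\<tau> \<noteq> []\<close> \<open>1 \<le> \<tau> ! 0\<close>] ijl
        \<open>?P ! j < ?P ! i\<close> \<open>?P ! l < ?P ! j\<close> by simp_all
    then show False
      using assms(2) ijl True len(1) by (auto simp: contains321_def)
  next
    case False
    then show False
      using insert_cycle_321_above[OF assms(1,3,5) ijl] \<open>?P ! j < ?P ! i\<close> \<open>?P ! l < ?P ! j\<close> assms(4)
      by simp
  qed
qed

theorem mainTheorem7:
  fixes \<sigma> \<tau> :: "nat list" and n m k :: nat
  assumes "1 \<le> n" and "1 \<le> m"
    and "\<sigma> \<in> Cyc321 n" and "\<tau> \<in> Cyc321 m"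
    and "1 \<le> k" and "k \<le> m" and "theta \<tau> ! (k - 1) = 1"
  defines "w \<equiv> map (\<lambda>x. x + n) (take k (theta \<tau>)) @ theta \<sigma> @ map (\<lambda>x. x + n) (drop k (theta \<tau>))"
  shows "(\<exists>\<pi>. is_perm (n + m) \<pi> \<and> theta \<pi> = w)
       \<and> (\<forall>\<pi>. is_perm (n + m) \<pi> \<and> theta \<pi> = w \<longrightarrow> \<pi> \<in> Cyc321 (n + m))"
proof -
  have \<sigma>: "cyclic_perm n \<sigma>" "is_perm n \<sigma>" "\<not> contains321 \<sigma>"
    and \<tau>: "cyclic_perm m \<tau>" "is_perm m \<tau>" "\<not> contains321 \<tau>"
    using assms(3,4) by (auto simp: Cyc321_def cyclic_perm_def)
  have S: "is_perm n (theta \<sigma>)" "theta \<sigma> ! 0 = n" "follows_cycle \<sigma> (theta \<sigma>)"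
    using theta_cyclic_perm[OF \<sigma>(1) assms(1)] by auto
  have T: "is_perm m (theta \<tau>)" "theta \<tau> ! 0 = m" "follows_cycle \<tau> (theta \<tau>)"
    using theta_cyclic_perm[OF \<tau>(1) assms(2)] by auto
  have "theta \<tau> \<noteq> []"
    using T(1) assms(2) by (auto simp: is_perm_def)
  define P where "P = insert_cycle n \<sigma> \<tau>"
  have "follows_cycle P w"
    unfolding P_def w_def
    using insert_cycle_follows_shifted_word[OF _ S _ _ T(1,3) assms(5-7)] \<sigma>(2) \<tau>(2) assms(1)
    by (simp add: is_perm_def)
  moreover have "is_perm (n + m) w"
    unfolding w_def by (rule is_perm_shifted_word[OF S(1) T(1)])
  moreover have "w ! 0 = n + m"
    unfolding w_def using nth_0_shifted_word[of k "theta \<tau>" "\<lambda>x. x + n"] \<open>theta \<tau> \<noteq> []\<close> T(2) assms(5)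
    by simp
  moreover have "length P = n + m"
    using length_insert_cycle[of \<tau> n \<sigma>] \<sigma>(2) \<tau>(2) assms(2)
    by (cases \<tau>) (auto simp: P_def is_perm_def)
  ultimately have "{\<pi>. is_perm (n + m) \<pi> \<and> theta \<pi> = w} = {P} \<and> cyclic_perm (n + m) P"
    using theta_preimage_follows_cycle[of "n + m" w P] assms(1) by simp
  moreover have "\<not> contains321 P"
    unfolding P_def by (rule insert_cycle_avoids_321[OF \<sigma>(2,3) \<tau>(2,3) assms(2)])
  ultimately show ?thesis
    unfolding Cyc321_def by (metis (lifting) mem_Collect_eq singletonD singletonI)
qed

end
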